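(* Let $M\in\mathbb{R}_+^{p\times q}$ be a nonnegative matrix. Then $M$ is a slack matrix of a polyhedral cone if and only if $$\{x^TM : x\in\mathbb{R}_+^p\}=\{x^TM : x\in\mathbb{R}^p\}\cap\mathbb{R}_+^q,$$ i.e., the cone spanned by the rows of $M$ coincides with the set of nonnegative vectors in the row span of $M$.
   Context: $\mathbb{R}_+$ denotes the nonnegative reals. A matrix $S\in\mathbb{R}^{p\times q}$ is a slack matrix of a polyhedral cone $K\subseteq\mathbb{R}^n$ if there are matrices $A\in\mathbb{R}^{p\times n}$ and $B\in\mathbb{R}^{n\times q}$ with $K=\{x\in\mathbb{R}^n: x^TB\ge 0\}=\{y^TA: y\in\mathbb{R}_+^p\}$ (the columns of $B$ give an $\mathcal{H}$-representation and the rows of $A$ a $\mathcal{V}$-representation of $K$) and $S=AB$. A matrix is a slack matrix of a polyhedral cone if it is a slack matrix of some polyhedral cone $K$ (in some $\mathbb{R}^n$). *)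

theory Defs
  imports Complex_Main
begin

text \<open>Matrices are represented as functions nat => nat => real, with the
dimensions carried explicitly (only entries with indices below the dimensions
matter).\<close>

definition vecs :: "nat \<Rightarrow> (nat \<Rightarrow> real) set" where
  "vecs m = {x. \<forall>i\<ge>m. x i = 0}"

definition row_comb :: "nat \<Rightarrow> nat \<Rightarrow> (nat \<Rightarrow> nat \<Rightarrow> real) \<Rightarrow> (nat \<Rightarrow> real) \<Rightarrow> (nat \<Rightarrow> real)" where
  "row_comb p m A y = (\<lambda>j. if j < m then (\<Sum>i<p. y i * A i j) else 0)"

definition H_cone :: "nat \<Rightarrow> nat \<Rightarrow> (nat \<Rightarrow> nat \<Rightarrow> real) \<Rightarrow> (nat \<Rightarrow> real) set" where
  "H_cone n q B = {x \<in> vecs n. \<forall>j<q. (\<Sum>i<n. x i * B i j) \<ge> 0}"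

definition V_cone :: "nat \<Rightarrow> nat \<Rightarrow> (nat \<Rightarrow> nat \<Rightarrow> real) \<Rightarrow> (nat \<Rightarrow> real) set" where
  "V_cone p n A = {row_comb p n A y | y. \<forall>i<p. y i \<ge> 0}"

definition is_cone_slack_matrix :: "nat \<Rightarrow> nat \<Rightarrow> (nat \<Rightarrow> nat \<Rightarrow> real) \<Rightarrow> bool" where
  "is_cone_slack_matrix p q S \<longleftrightarrow>
     (\<exists>(n::nat) (A::nat \<Rightarrow> nat \<Rightarrow> real) (B::nat \<Rightarrow> nat \<Rightarrow> real) (K::(nat \<Rightarrow> real) set).
        K = H_cone n q B \<and> K = V_cone p n A \<and>
        (\<forall>i<p. \<forall>j<q. S i j = (\<Sum>k<n. A i k * B k j)))"

end

theory Submission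
  imports Defs
begin

text \<open>If \<open>M = A B\<close>, then \<open>M\<close> satisfies the condition: a nonnegative vector \<open>x\<^sup>T M\<close> is
\<open>u\<^sup>T B\<close> for \<open>u = x\<^sup>T A\<close>, so \<open>u\<close> lies in the H-cone, hence \<open>u = y\<^sup>T A\<close> with \<open>y \<ge> 0\<close> by the
V-description, and \<open>x\<^sup>T M = y\<^sup>T M\<close>.
Conversely, factor \<open>M = A B\<close> through a basis of its row space, so that the rows of \<open>B\<close>
are linearly independent and are combinations \<open>B = C M\<close> of rows of \<open>M\<close>. The V-cone of \<open>A\<close>
lies in the H-cone of \<open>B\<close> because \<open>M \<ge> 0\<close>. If \<open>x\<^sup>T B \<ge> 0\<close>, then \<open>x\<^sup>T B = (x\<^sup>T C) M\<close> is a
nonnegative vector of the row space of \<open>M\<close>, hence equals \<open>y\<^sup>T M = (y\<^sup>T A) B\<close> for some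
\<open>y \<ge> 0\<close>, and independence of the rows of \<open>B\<close> gives \<open>x = y\<^sup>T A\<close>.\<close>

lemma row_comb_in_vecs: "row_comb p m A y \<in> vecs m"
  by (simp add: row_comb_def vecs_def)

lemma row_comb_diff:
  "row_comb p m A (\<lambda>i. x i - y i) = (\<lambda>j. row_comb p m A x j - row_comb p m A y j)"
  by (rule ext) (simp add: row_comb_def left_diff_distrib sum_subtractf)

lemma row_comb_row_comb:
  assumes "\<forall>i<p. \<forall>j<q. M i j = (\<Sum>k<n. A i k * B k j)"
  shows "row_comb n q B (row_comb p n A y) = row_comb p q M y"
proof
  fix j
  show "row_comb n q B (row_comb p n A y) j = row_comb p q M y j"
  proof (cases "j < q")
    case True
    have "(\<Sum>k<n. row_comb p n A y k * B k j) = (\<Sum>k<n. \<Sum>i<p. y i * (A i k * B k j))"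
      by (simp add: row_comb_def sum_distrib_right mult.assoc)
    also have "\<dots> = (\<Sum>i<p. \<Sum>k<n. y i * (A i k * B k j))"
      by (rule sum.swap)
    also have "\<dots> = (\<Sum>i<p. y i * M i j)"
      using assms True by (simp add: sum_distrib_left)
    finally show ?thesis
      using True by (simp add: row_comb_def)
  qed (simp add: row_comb_def)
qed

lemma H_cone_eq: "H_cone n q B = {x \<in> vecs n. \<forall>j<q. row_comb n q B x j \<ge> 0}"
  by (simp add: H_cone_def row_comb_def)

lemma inj_on_row_comb_vecs:
  assumes "\<forall>x\<in>vecs n. row_comb n q B x = (\<lambda>_. 0) \<longrightarrow> x = (\<lambda>_. 0)"
  shows "inj_on (row_comb n q B) (vecs n)"
proof (rule inj_onI)
  fix x y assume "x \<in> vecs n" "y \<in> vecs n" "row_comb n q B x = row_comb n q B y"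
  then have "(\<lambda>i. x i - y i) \<in> vecs n" "row_comb n q B (\<lambda>i. x i - y i) = (\<lambda>_. 0)"
    by (simp_all add: vecs_def row_comb_diff)
  then have "(\<lambda>i. x i - y i) = (\<lambda>_. 0)"
    using assms by blast
  then show "x = y"
    by (simp add: fun_eq_iff)
qed

text \<open>Induction on the number of rows of \<open>M\<close>: a new row either lies in the row space of
\<open>B\<close> already, or is appended to \<open>B\<close> as a further independent row.\<close>

lemma rank_factorization:
  fixes M :: "nat \<Rightarrow> nat \<Rightarrow> real"
  shows "\<exists>n A B C. (\<forall>i<p. \<forall>j<q. M i j = (\<Sum>k<n. A i k * B k j)) \<and>
     (\<forall>k<n. \<forall>j<q. B k j = (\<Sum>i<p. C k i * M i j)) \<and>
     (\<forall>x\<in>vecs n. row_comb n q B x = (\<lambda>_. 0) \<longrightarrow> x = (\<lambda>_. 0))"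
proof (induction p)
  case 0
  show ?case
    by (rule exI[of _ 0]) (auto simp: vecs_def)
next
  case (Suc p)
  then obtain n A B C where
    MAB: "\<forall>i<p. \<forall>j<q. M i j = (\<Sum>k<n. A i k * B k j)" and
    BCM: "\<forall>k<n. \<forall>j<q. B k j = (\<Sum>i<p. C k i * M i j)" and
    indep: "\<forall>x\<in>vecs n. row_comb n q B x = (\<lambda>_. 0) \<longrightarrow> x = (\<lambda>_. 0)"
    by blast
  define C' where "C' = (\<lambda>k i. if k = n then if i = p then 1 else 0
                                  else if i = p then 0 else C k i)"
  have BCM': "\<forall>k<n. \<forall>j<q. B k j = (\<Sum>i<Suc p. C' k i * M i j)"
    using BCM by (simp add: C'_def)
  show ?case
  proof (cases "\<exists>c. \<forall>j<q. M p j = (\<Sum>k<n. c k * B k j)")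
    case True
    then obtain c where "\<forall>j<q. M p j = (\<Sum>k<n. c k * B k j)" by blast
    then have "\<forall>i<Suc p. \<forall>j<q. M i j = (\<Sum>k<n. (A(p := c)) i k * B k j)"
      using MAB by (auto simp: less_Suc_eq)
    with BCM' indep show ?thesis
      by (intro exI[of _ n] exI[of _ "A(p := c)"] exI[of _ B] exI[of _ C'] conjI)
  next
    case False
    define A' where "A' = (\<lambda>i k. if k = n then if i = p then 1 else 0
                                  else if i = p then 0 else A i k)"
    define B' where "B' = B(n := M p)"
    have "\<forall>i<Suc p. \<forall>j<q. M i j = (\<Sum>k<Suc n. A' i k * B' k j)"
      using MAB by (auto simp: A'_def B'_def less_Suc_eq)
    moreover have "\<forall>k<Suc n. \<forall>j<q. B' k j = (\<Sum>i<Suc p. C' k i * M i j)"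
      using BCM' by (auto simp: B'_def C'_def less_Suc_eq)
    moreover have "\<forall>x\<in>vecs (Suc n). row_comb (Suc n) q B' x = (\<lambda>_. 0) \<longrightarrow> x = (\<lambda>_. 0)"
    proof (intro ballI impI)
      fix x assume x: "x \<in> vecs (Suc n)" and zero: "row_comb (Suc n) q B' x = (\<lambda>_. 0)"
      have sum0: "(\<Sum>k<n. x k * B k j) + x n * M p j = 0" if "j < q" for j
        using fun_cong[OF zero, of j] that by (simp add: row_comb_def B'_def)
      have "x n = 0"
      proof (rule ccontr)
        assume xn: "x n \<noteq> 0"
        have "M p j = (\<Sum>k<n. (- x k / x n) * B k j)" if "j < q" for j
        proof -
          have "M p j = - (\<Sum>k<n. x k * B k j) / x n"
            using sum0[OF that] xn by (simp add: field_simps)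
          also have "\<dots> = (\<Sum>k<n. (- x k / x n) * B k j)"
            by (simp add: sum_divide_distrib sum_negf)
          finally show ?thesis .
        qed
        then have "\<exists>c. \<forall>j<q. M p j = (\<Sum>k<n. c k * B k j)"
          by (intro exI[of _ "\<lambda>k. - x k / x n"]) blast
        with False show False ..
      qed
      have "x i = 0" if "n \<le> i" for i
        using that x \<open>x n = 0\<close> by (cases "i = n") (auto simp: vecs_def)
      then have "x \<in> vecs n"
        by (simp add: vecs_def)
      moreover have "row_comb n q B x = (\<lambda>_. 0)"
        using sum0 \<open>x n = 0\<close> by (auto simp: row_comb_def)
      ultimately show "x = (\<lambda>_. 0)"
        using indep by blast
    qed
    ultimately show ?thesis
      by (intro exI[of _ "Suc n"] exI[of _ A'] exI[of _ B'] exI[of _ C'] conjI)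
  qed
qed

lemma cone_slack_matrix_nonneg_row_space:
  assumes "is_cone_slack_matrix p q M"
  shows "{row_comb p q M x | x. True} \<inter> {v. \<forall>j<q. v j \<ge> 0}
           \<subseteq> {row_comb p q M x | x. \<forall>i<p. x i \<ge> 0}"
proof
  obtain n A B where HV: "H_cone n q B = V_cone p n A"
    and MAB: "\<forall>i<p. \<forall>j<q. M i j = (\<Sum>k<n. A i k * B k j)"
    using assms unfolding is_cone_slack_matrix_def by blast
  fix v assume "v \<in> {row_comb p q M x | x. True} \<inter> {v. \<forall>j<q. v j \<ge> 0}"
  then obtain x where v: "v = row_comb p q M x" and v_nonneg: "\<forall>j<q. v j \<ge> 0" by blast
  have "row_comb p n A x \<in> H_cone n q B"
    using v v_nonneg by (simp add: H_cone_eq row_comb_in_vecs row_comb_row_comb[OF MAB])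
  then obtain y where "row_comb p n A x = row_comb p n A y" and "\<forall>i<p. y i \<ge> 0"
    unfolding HV V_cone_def by blast
  moreover have "v = row_comb n q B (row_comb p n A x)"
    by (simp add: v row_comb_row_comb[OF MAB])
  ultimately show "v \<in> {row_comb p q M x | x. \<forall>i<p. x i \<ge> 0}"
    by (auto simp: row_comb_row_comb[OF MAB])
qed

lemma cone_slack_matrixI:
  assumes M_nonneg: "\<forall>i<p. \<forall>j<q. M i j \<ge> 0"
    and row_space: "{row_comb p q M x | x. True} \<inter> {v. \<forall>j<q. v j \<ge> 0}
                      \<subseteq> {row_comb p q M x | x. \<forall>i<p. x i \<ge> 0}"
  shows "is_cone_slack_matrix p q M"
proof -
  obtain n A B C where
    MAB: "\<forall>i<p. \<forall>j<q. M i j = (\<Sum>k<n. A i k * B k j)" and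
    BCM: "\<forall>k<n. \<forall>j<q. B k j = (\<Sum>i<p. C k i * M i j)" and
    indep: "\<forall>x\<in>vecs n. row_comb n q B x = (\<lambda>_. 0) \<longrightarrow> x = (\<lambda>_. 0)"
    using rank_factorization by blast
  have inj: "inj_on (row_comb n q B) (vecs n)"
    using indep by (rule inj_on_row_comb_vecs)
  have "V_cone p n A \<subseteq> H_cone n q B"
  proof
    fix u assume "u \<in> V_cone p n A"
    then obtain y where u: "u = row_comb p n A y" and y: "\<forall>i<p. y i \<ge> 0"
      unfolding V_cone_def by blast
    have "\<forall>j<q. row_comb p q M y j \<ge> 0"
      using M_nonneg y by (auto simp: row_comb_def intro!: sum_nonneg)
    then show "u \<in> H_cone n q B"
      by (simp add: u H_cone_eq row_comb_in_vecs row_comb_row_comb[OF MAB])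
  qed
  moreover have "H_cone n q B \<subseteq> V_cone p n A"
  proof
    fix x assume x: "x \<in> H_cone n q B"
    have "row_comb n q B x = row_comb p q M (row_comb n p C x)"
      by (simp add: row_comb_row_comb[OF BCM])
    then have "row_comb n q B x \<in> {row_comb p q M x | x. True} \<inter> {v. \<forall>j<q. v j \<ge> 0}"
      using x by (auto simp: H_cone_eq)
    then obtain y where y: "row_comb n q B x = row_comb p q M y" "\<forall>i<p. y i \<ge> 0"
      using row_space by blast
    then have "row_comb n q B x = row_comb n q B (row_comb p n A y)"
      by (simp add: row_comb_row_comb[OF MAB])
    then have "x = row_comb p n A y"
      using inj x by (auto simp: H_cone_def row_comb_in_vecs dest: inj_onD)
    then show "x \<in> V_cone p n A"
      using y by (auto simp: V_cone_def)
  qed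
  ultimately have "H_cone n q B = V_cone p n A" by blast
  with MAB show ?thesis
    unfolding is_cone_slack_matrix_def
    by (intro exI[of _ n] exI[of _ A] exI[of _ B] exI[of _ "H_cone n q B"] conjI refl)
qed

theorem theorem2p1:
  fixes p q :: nat and M :: "nat \<Rightarrow> nat \<Rightarrow> real"
  assumes "\<forall>i<p. \<forall>j<q. M i j \<ge> 0"
  shows "is_cone_slack_matrix p q M \<longleftrightarrow>
         {row_comb p q M x | x. \<forall>i<p. x i \<ge> 0} =
         {row_comb p q M x | x. True} \<inter> {v. \<forall>j<q. v j \<ge> 0}"
proof -
  have cone_sub: "{row_comb p q M x | x. \<forall>i<p. x i \<ge> 0}
          \<subseteq> {row_comb p q M x | x. True} \<inter> {v. \<forall>j<q. v j \<ge> 0}"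
    using assms by (auto simp: row_comb_def intro!: sum_nonneg)
  show ?thesis
  proof
    assume "is_cone_slack_matrix p q M"
    then show "{row_comb p q M x | x. \<forall>i<p. x i \<ge> 0} =
               {row_comb p q M x | x. True} \<inter> {v. \<forall>j<q. v j \<ge> 0}"
      by (intro subset_antisym cone_sub cone_slack_matrix_nonneg_row_space)
  next
    assume "{row_comb p q M x | x. \<forall>i<p. x i \<ge> 0} =
            {row_comb p q M x | x. True} \<inter> {v. \<forall>j<q. v j \<ge> 0}"
    then show "is_cone_slack_matrix p q M"
      by (intro cone_slack_matrixI[OF assms]) simp
  qed
qed

end
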